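(* Let $\varepsilon>0$, $0<\kappa<1$, $M\ge0$, and let $\{a_n\}_{n=1}^\infty$, $\{b_n\}_{n=1}^\infty$ be sequences of positive integers with $\{a_n\}$ non-decreasing, $\limsup_{n\to\infty}a_n^{(M+2)^{-n}}=\infty$, and $a_n\ge n^{1+\varepsilon}$, $b_n\le 2^{(\log_2 a_n)^\kappa}$ for all sufficiently large $n$. Let $k$ be a positive integer. Then for infinitely many $N>k$, \[a_N>\Big(1+\frac1{N^2}\Big)^{(M+2)^N}\Big(\max_{k\le n<N}a_n^{(M+2)^{-n}}\Big)^{(M+2)^N},\] and for every such $N$ we further have \[a_N>\Big(1+\frac1{N^2}\Big)^{(M+2)^N}\prod_{n=k}^{N-1}a_n^{M+1}.\] *)

theory Defs
  imports "HOL-Analysis.Analysis"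
begin

end

theory Submission
  imports Defs
begin

text \<open>
  Put \<open>c = M + 2\<close>, \<open>x n = a n powr (c powr - n)\<close> and let \<open>m N\<close> be the maximum of
  \<open>x n\<close> over \<open>k \<le> n < N\<close>. Taking \<open>c ^ N\<close>-th roots, the first inequality says
  \<open>x N > (1 + 1 / N\<^sup>2) m N\<close>. If this failed for all large \<open>N\<close>, then eventually
  \<open>m (N + 1) \<le> (1 + 1 / N\<^sup>2) m N\<close>; as \<open>(1 + 1 / n\<^sup>2) (1 - 1 / n) \<le> 1 - 1 / (n + 1)\<close>, the
  products of these factors stay bounded, so \<open>x\<close> would be bounded, contradicting
  \<open>limsup x = \<infinity>\<close>. The second
  inequality follows from \<open>a n powr (M + 1) = x n powr ((c - 1) c ^ n) \<le> m N powr ((c - 1) c ^ n)\<close>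
  for \<open>k \<le> n < N\<close> and \<open>(c - 1) (c ^ k + \<dots> + c ^ (N - 1)) \<le> c ^ N\<close>.
\<close>

lemma inverse_square_factor_le:
  assumes "1 \<le> n"
  shows "(1 + 1 / real n ^ 2) * (1 - 1 / real n) \<le> 1 - 1 / real (Suc n)"
proof -
  have n: "real n \<ge> 1" using assms by simp
  \<comment> \<open>after clearing denominators this is \<open>n\<^sup>4 - 1 \<le> n\<^sup>4\<close>\<close>
  have "(real n ^ 2 + 1) * (real n - 1) * (real n + 1) \<le> real n ^ 4"
    by (simp add: algebra_simps power2_eq_square power4_eq_xxxx)
  then show ?thesis
    using n by (simp add: field_simps power2_eq_square power3_eq_cube power4_eq_xxxx)
qed

lemma bounded_by_inverse_square_growth:
  fixes u :: "nat \<Rightarrow> real"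
  assumes "2 \<le> N\<^sub>0" and "0 \<le> u N\<^sub>0"
    and grow: "\<And>n. N\<^sub>0 \<le> n \<Longrightarrow> u (Suc n) \<le> (1 + 1 / real n ^ 2) * u n"
    and "N\<^sub>0 \<le> n"
  shows "u n \<le> 2 * u N\<^sub>0"
proof -
  define K where "K = u N\<^sub>0 * (real N\<^sub>0 / (real N\<^sub>0 - 1))"
  have ratio: "real N\<^sub>0 / (real N\<^sub>0 - 1) \<le> 2"
    using assms(1) by (simp add: field_simps)
  have K: "0 \<le> K" "K \<le> 2 * u N\<^sub>0"
    using assms(1,2) mult_left_mono[OF ratio assms(2)] by (simp_all add: K_def mult.commute)
  have "u n \<le> K * (1 - 1 / real n)"
    using \<open>N\<^sub>0 \<le> n\<close>
  proof (induction n rule: nat_induct_at_least)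
    case base
    then show ?case using assms(1) by (simp add: K_def field_simps)
  next
    case (Suc n)
    have "u (Suc n) \<le> (1 + 1 / real n ^ 2) * u n"
      using grow[OF Suc.hyps] .
    also have "\<dots> \<le> (1 + 1 / real n ^ 2) * (K * (1 - 1 / real n))"
      using Suc.IH by (intro mult_left_mono) auto
    also have "\<dots> = K * ((1 + 1 / real n ^ 2) * (1 - 1 / real n))"
      by simp
    also have "\<dots> \<le> K * (1 - 1 / real (Suc n))"
      using Suc.hyps assms(1) K(1) by (intro mult_left_mono inverse_square_factor_le) auto
    finally show ?case .
  qed
  also have "\<dots> \<le> K"
    using K(1) by (simp add: mult_left_le)
  finally show ?thesis using K(2) by linarith
qed

lemma running_max_Suc:
  fixes x :: "nat \<Rightarrow> 'a :: linorder"
  assumes "k < N"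
  shows "Max (x ` {k..<Suc N}) = max (x N) (Max (x ` {k..<N}))"
proof -
  have "{k..<Suc N} = insert N {k..<N}" using assms by auto
  then show ?thesis using assms by (simp add: Max_insert)
qed

lemma eventually_bounded_if_running_max_grows_slowly:
  fixes x :: "nat \<Rightarrow> real"
  assumes nonneg: "\<And>n. 0 \<le> x n"
    and slow: "\<forall>\<^sub>F N in sequentially. x N \<le> (1 + 1 / real N ^ 2) * Max (x ` {k..<N})"
  shows "\<exists>B. \<forall>\<^sub>F N in sequentially. x N \<le> B"
proof -
  define m where "m N = Max (x ` {k..<N})" for N
  obtain N\<^sub>0 where N\<^sub>0: "k + 2 \<le> N\<^sub>0" and slow_N\<^sub>0: "\<And>N. N\<^sub>0 \<le> N \<Longrightarrow> x N \<le> (1 + 1 / real N ^ 2) * m N"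
    using eventually_conj[OF slow eventually_ge_at_top[of "k + 2"]]
    unfolding eventually_sequentially m_def by (meson le_add2 le_trans)
  have m_nonneg: "0 \<le> m N" if "k < N" for N
    using that nonneg[of k] by (auto simp: m_def intro: order_trans[OF _ Max_ge])
  have m_grow: "m (Suc N) \<le> (1 + 1 / real N ^ 2) * m N" if "N\<^sub>0 \<le> N" for N
  proof -
    have "k < N" using that N\<^sub>0 by simp
    then have "m (Suc N) = max (x N) (m N)" unfolding m_def by (rule running_max_Suc)
    moreover have "m N \<le> (1 + 1 / real N ^ 2) * m N"
      using m_nonneg[OF \<open>k < N\<close>] by (simp add: mult_le_cancel_right1)
    ultimately show ?thesis using slow_N\<^sub>0[OF that] by simp
  qed
  have "x N \<le> 2 * m N\<^sub>0" if "N\<^sub>0 \<le> N" for N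
  proof -
    have "k < N" using that N\<^sub>0 by simp
    then have "x N \<le> m (Suc N)" unfolding m_def by (simp add: running_max_Suc)
    also have "\<dots> \<le> 2 * m N\<^sub>0"
      using N\<^sub>0 that m_nonneg m_grow by (intro bounded_by_inverse_square_growth) auto
    finally show ?thesis .
  qed
  then show ?thesis unfolding eventually_sequentially by blast
qed

lemma diff_one_mult_sum_power_le:
  fixes c :: real
  assumes "1 \<le> c"
  shows "(c - 1) * (\<Sum>n=k..<N. c ^ n) \<le> c ^ N"
proof (induction N)
  case 0
  then show ?case by simp
next
  case (Suc N)
  have "(c - 1) * (\<Sum>n=k..<Suc N. c ^ n) \<le> c ^ N + (c - 1) * c ^ N"
    using Suc.IH assms by (simp add: sum.atLeastLessThan_Suc algebra_simps)
  then show ?case by (simp add: algebra_simps)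
qed

lemma prod_powr_geometric_le:
  fixes y :: "nat \<Rightarrow> real" and c m :: real
  assumes "1 \<le> c" and "1 \<le> m" and y: "\<And>n. n \<in> {k..<N} \<Longrightarrow> 0 \<le> y n \<and> y n \<le> m"
  shows "(\<Prod>n=k..<N. (y n powr (c ^ n)) powr (c - 1)) \<le> m powr (c ^ N)"
proof -
  have "(\<Prod>n=k..<N. (y n powr (c ^ n)) powr (c - 1)) \<le> (\<Prod>n=k..<N. m powr ((c - 1) * c ^ n))"
    using assms by (intro prod_mono) (auto simp: powr_powr mult.commute intro: powr_mono2)
  also have "\<dots> = m powr ((c - 1) * (\<Sum>n=k..<N. c ^ n))"
    using assms(2) by (simp add: powr_sum sum_distrib_left)
  also have "\<dots> \<le> m powr (c ^ N)"
    using assms(1,2) by (intro powr_mono diff_one_mult_sum_power_le) auto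
  finally show ?thesis .
qed

lemma less_powr_inverse_iff:
  fixes s t p :: real
  assumes "0 \<le> s" and "0 \<le> t" and "0 < p"
  shows "s < t powr (1 / p) \<longleftrightarrow> s powr p < t"
proof -
  have mono: "y < z \<longleftrightarrow> y powr p < z powr p" if "0 \<le> y" "0 \<le> z" for y z :: real
    using that assms(3) by (meson not_less powr_less_mono2 powr_mono2 less_imp_le)
  show ?thesis
    using mono[OF assms(1) powr_ge_zero[of t "1 / p"]] assms by (simp add: powr_powr)
qed

lemma infinite_running_max_jumps:
  fixes x :: "nat \<Rightarrow> real"
  assumes nonneg: "\<And>n. 0 \<le> x n" and unbounded: "limsup (\<lambda>n. ereal (x n)) = \<infinity>"
  shows "infinite {N. k < N \<and> (1 + 1 / real N ^ 2) * Max (x ` {k..<N}) < x N}"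
proof
  assume "finite {N. k < N \<and> (1 + 1 / real N ^ 2) * Max (x ` {k..<N}) < x N}"
  then have "\<forall>\<^sub>F N in sequentially. \<not> (k < N \<and> (1 + 1 / real N ^ 2) * Max (x ` {k..<N}) < x N)"
    by (simp add: eventually_cofinite flip: cofinite_eq_sequentially)
  then have "\<forall>\<^sub>F N in sequentially. x N \<le> (1 + 1 / real N ^ 2) * Max (x ` {k..<N})"
    using eventually_gt_at_top[of k] by eventually_elim auto
  then obtain B where "\<forall>\<^sub>F N in sequentially. x N \<le> B"
    using eventually_bounded_if_running_max_grows_slowly nonneg by blast
  then have "limsup (\<lambda>n. ereal (x n)) \<le> ereal B"
    by (intro Limsup_bounded) (auto elim: eventually_mono)
  then show False using unbounded by simp
qed

theorem corollary1:
  fixes \<epsilon> \<kappa> M :: real and a b :: "nat \<Rightarrow> nat" and k :: nat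
  assumes "\<epsilon> > 0" and "0 < \<kappa>" and "\<kappa> < 1" and "M \<ge> 0"
    and "\<And>n. n \<ge> 1 \<Longrightarrow> a n > 0"
    and "\<And>n. n \<ge> 1 \<Longrightarrow> b n > 0"
    and "\<And>m n. 1 \<le> m \<Longrightarrow> m \<le> n \<Longrightarrow> a m \<le> a n"
    and "limsup (\<lambda>n. ereal (real (a n) powr ((M + 2) powr (- real n)))) = \<infinity>"
    and "\<forall>\<^sub>F n in sequentially. real (a n) \<ge> real n powr (1 + \<epsilon>)"
    and "\<forall>\<^sub>F n in sequentially. real (b n) \<le> 2 powr ((log 2 (real (a n))) powr \<kappa>)"
    and "k \<ge> 1"
  shows "infinite {N. N > k \<and>
            real (a N) > (1 + 1 / real N ^ 2) powr ((M + 2) ^ N) *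
              (Max ((\<lambda>n. real (a n) powr ((M + 2) powr (- real n))) ` {k..<N})) powr ((M + 2) ^ N)}
       \<and> (\<forall>N. N > k \<and>
            real (a N) > (1 + 1 / real N ^ 2) powr ((M + 2) ^ N) *
              (Max ((\<lambda>n. real (a n) powr ((M + 2) powr (- real n))) ` {k..<N})) powr ((M + 2) ^ N)
          \<longrightarrow> real (a N) > (1 + 1 / real N ^ 2) powr ((M + 2) ^ N) *
              (\<Prod>n=k..<N. real (a n) powr (M + 1)))"
proof -
  define c where "c = M + 2"
  define x where "x n = real (a n) powr (c powr - real n)" for n
  let ?m = "\<lambda>N. Max (x ` {k..<N})"
  have c: "1 \<le> c" and c_pred: "c - 1 = M + 1" using \<open>M \<ge> 0\<close> by (simp_all add: c_def)
  have x_root: "x n = real (a n) powr (1 / c ^ n)" for n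
    using c by (simp add: x_def powr_minus powr_realpow divide_inverse)
  have x_powr: "x n powr (c ^ n) = real (a n)" for n
    using c by (simp add: x_root powr_powr)
  have x_nonneg: "0 \<le> x n" for n
    by (simp add: x_def)
  have x_ge_1: "1 \<le> x n" if "k \<le> n" for n
    using assms(5)[of n] that \<open>k \<ge> 1\<close> by (simp add: x_def ge_one_powr_ge_zero)
  have jump_iff: "(1 + 1 / real N ^ 2) powr (c ^ N) * ?m N powr (c ^ N) < real (a N)
      \<longleftrightarrow> (1 + 1 / real N ^ 2) * ?m N < x N" if "k < N" for N
  proof -
    have "0 \<le> ?m N" using that x_nonneg by (auto simp: Max_ge_iff)
    then show ?thesis
      using c by (simp add: x_root less_powr_inverse_iff powr_mult)
  qed
  have "infinite {N. k < N \<and> (1 + 1 / real N ^ 2) powr (c ^ N) * ?m N powr (c ^ N) < real (a N)}"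
    using infinite_running_max_jumps[of x k] x_nonneg assms(8) jump_iff
    by (simp add: x_def c_def cong: conj_cong)
  moreover have "(1 + 1 / real N ^ 2) powr (c ^ N) * (\<Prod>n=k..<N. real (a n) powr (M + 1)) < real (a N)"
    if "k < N" and jump: "(1 + 1 / real N ^ 2) powr (c ^ N) * ?m N powr (c ^ N) < real (a N)" for N
  proof -
    have "(\<Prod>n=k..<N. real (a n) powr (M + 1)) = (\<Prod>n=k..<N. (x n powr (c ^ n)) powr (c - 1))"
      by (simp only: x_powr c_pred)
    also have "\<dots> \<le> ?m N powr (c ^ N)"
      using that c x_ge_1 x_nonneg by (intro prod_powr_geometric_le) (auto simp: Max_ge_iff)
    finally have "(1 + 1 / real N ^ 2) powr (c ^ N) * (\<Prod>n=k..<N. real (a n) powr (M + 1))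
        \<le> (1 + 1 / real N ^ 2) powr (c ^ N) * ?m N powr (c ^ N)"
      by (rule mult_left_mono) simp
    with jump show ?thesis by linarith
  qed
  ultimately show ?thesis by (simp add: x_def c_def)
qed

end
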